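(* For $n\ge0$ and $k\ge1$, $$\left|\Pi_n\wr C_k(1^11^2,1^12^2,1^21^1)\right|=\sum_{i_1+i_2+\dots+i_k=n}B(i_1)B(i_2)\cdots B(i_k),$$ where the sum is over all $k$-tuples of nonnegative integers $(i_1,\dots,i_k)$ with sum $n$ and $B(m)$ is the $m$th Bell number.
   Context: For $n\ge0$ let $[n]=\{1,\dots,n\}$. A $k$-colored set partition of $[n]$ is a set partition of $[n]$ together with an assignment of a color from $[k]$ to each element; $\Pi_n\wr C_k$ is the set of these. A colored partition $\sigma$ contains a two-element colored pattern in the pattern sense according to the following: $\sigma$ contains $1^11^2$ iff there are $i<j$ in the same block with color of $i$ strictly less than color of $j$; $\sigma$ contains $1^21^1$ iff there are $i<j$ in the same block with color of $i$ strictly greater than color of $j$; $\sigma$ contains $1^12^2$ iff there are $i<j$ in different blocks with color of $i$ strictly less than color of $j$. $\Pi_n\wr C_k(S)$ is the set of $\sigma\in\Pi_n\wr C_k$ containing none of the patterns in $S$. $B(m)$ is the number of set partitions of $[m]$, with $B(0)=1$. *)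

theory Defs
  imports Main "HOL-Library.Disjoint_Sets" "HOL-Library.FuncSet"
begin

definition set_partitions :: "nat \<Rightarrow> nat set set set" where
  "set_partitions m = {P. partition_on {1..m} P}"

definition Bell :: "nat \<Rightarrow> nat" where
  "Bell m = card (set_partitions m)"

definition colored_partitions :: "nat \<Rightarrow> nat \<Rightarrow> (nat set set \<times> (nat \<Rightarrow> nat)) set" where
  "colored_partitions n k = set_partitions n \<times> ({1..n} \<rightarrow>\<^sub>E {1..k})"

definition same_block :: "nat set set \<Rightarrow> nat \<Rightarrow> nat \<Rightarrow> bool" where
  "same_block P i j \<longleftrightarrow> (\<exists>B\<in>P. i \<in> B \<and> j \<in> B)"

definition contains_11_12 :: "nat set set \<times> (nat \<Rightarrow> nat) \<Rightarrow> bool" where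
  "contains_11_12 \<sigma> \<longleftrightarrow> (\<exists>i j. i < j \<and> same_block (fst \<sigma>) i j \<and> snd \<sigma> i < snd \<sigma> j)"

definition contains_12_11 :: "nat set set \<times> (nat \<Rightarrow> nat) \<Rightarrow> bool" where
  "contains_12_11 \<sigma> \<longleftrightarrow> (\<exists>i j. i < j \<and> same_block (fst \<sigma>) i j \<and> snd \<sigma> i > snd \<sigma> j)"

definition contains_11_22 :: "nat \<Rightarrow> nat set set \<times> (nat \<Rightarrow> nat) \<Rightarrow> bool" where
  "contains_11_22 n \<sigma> \<longleftrightarrow> (\<exists>i j. 1 \<le> i \<and> i < j \<and> j \<le> n \<and> \<not> same_block (fst \<sigma>) i j
       \<and> snd \<sigma> i < snd \<sigma> j)"

definition avoiders :: "nat \<Rightarrow> nat \<Rightarrow> (nat set set \<times> (nat \<Rightarrow> nat)) set" where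
  "avoiders n k = {\<sigma> \<in> colored_partitions n k.
     \<not> contains_11_12 \<sigma> \<and> \<not> contains_11_22 n \<sigma> \<and> \<not> contains_12_11 \<sigma>}"

definition compositions :: "nat \<Rightarrow> nat \<Rightarrow> (nat \<Rightarrow> nat) set" where
  "compositions k n = {t \<in> {1..k} \<rightarrow>\<^sub>E (UNIV :: nat set). (\<Sum>j=1..k. t j) = n}"

end

theory Submission
  imports Defs
begin

(* Avoiding 1^1 1^2 and 1^2 1^1 means that every block is monochromatic; given this, avoiding
   1^1 2^2 means that the colouring is weakly decreasing on [n]. So an avoider is a weakly
   decreasing colouring together with a set partition of each colour class. The class of colour 1
   is a final segment {n-m+1..n}, which admits B(m) partitions, and removing it leaves an avoider
   on [n-m] with one colour fewer. This gives the recursion A(n, k+1) = \<Sum>m\<le>n. B(m) A(n-m, k),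
   which the sum over compositions satisfies as well. *)

section \<open>Partitions of disjoint unions and translates\<close>

lemma partition_on_Un:
  assumes "partition_on A P" "partition_on B Q" "A \<inter> B = {}"
  shows "partition_on (A \<union> B) (P \<union> Q)"
proof (rule partition_onI)
  fix X Y assume "X \<in> P \<union> Q" "Y \<in> P \<union> Q" "X \<noteq> Y"
  then show "disjnt X Y"
    using assms(3) partition_onD1[OF assms(1)] partition_onD1[OF assms(2)]
      partition_onD2[OF assms(1)] partition_onD2[OF assms(2)]
    unfolding disjnt_def pairwise_def by blast
qed (use assms in \<open>auto dest: partition_onD1 partition_onD3\<close>)

lemma partition_on_blocks_subset:
  assumes P: "partition_on C P" and "A \<subseteq> C" and split: "\<And>X. X \<in> P \<Longrightarrow> X \<subseteq> A \<or> X \<inter> A = {}"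
  shows "partition_on A {X \<in> P. X \<subseteq> A}"
proof (rule partition_onI)
  show "\<Union>{X \<in> P. X \<subseteq> A} = A"
    using partition_onD1[OF P] \<open>A \<subseteq> C\<close> split by blast
  show "disjnt X Y" if "X \<in> {X \<in> P. X \<subseteq> A}" "Y \<in> {X \<in> P. X \<subseteq> A}" "X \<noteq> Y" for X Y
    using that partition_onD2[OF P] by (auto dest: pairwiseD)
  show "{} \<notin> {X \<in> P. X \<subseteq> A}"
    using partition_onD3[OF P] by blast
qed

lemma partition_on_block_subset: "partition_on A P \<Longrightarrow> X \<in> P \<Longrightarrow> X \<subseteq> A"
  by (auto dest: partition_onD1)

lemma bij_betw_partition_on:
  assumes f: "bij_betw f A B"
  shows "bij_betw (image (image f)) {P. partition_on A P} {Q. partition_on B Q}"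
proof -
  have partition_image: "image (image h) P \<in> {Q. partition_on Y Q}"
    if h: "bij_betw h X Y" and P: "partition_on X P" for h X Y P
  proof -
    have "image (image h) P - {{}} = image (image h) P"
      using partition_onD3[OF P] by auto
    then show ?thesis
      using partition_on_inj_image[OF P bij_betw_imp_inj_on[OF h]] bij_betw_imp_surj_on[OF h]
      by simp
  qed
  have "{Q. partition_on B Q} \<subseteq> image (image f) ` {P. partition_on A P}"
  proof
    fix Q assume Q: "Q \<in> {Q. partition_on B Q}"
    have "f ` inv_into A f ` X = X" if "X \<in> Q" for X
    proof (rule image_inv_into_cancel)
      show "f ` A = B" using f by (simp add: bij_betw_def)
      show "X \<subseteq> B" using that Q by (auto dest: partition_onD1)
    qed
    then have "Q = image (image f) (image (image (inv_into A f)) Q)"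
      by (simp add: image_image)
    then show "Q \<in> image (image f) ` {P. partition_on A P}"
      using partition_image[OF bij_betw_inv_into[OF f]] Q by blast
  qed
  then have "image (image f) ` {P. partition_on A P} = {Q. partition_on B Q}"
    using partition_image[OF f] by blast
  moreover have "inj_on (image (image f)) {P. partition_on A P}"
    using inj_on_image_Pow[OF inj_on_image_Pow[OF bij_betw_imp_inj_on[OF f]]]
    by (rule inj_on_subset) (auto dest: partition_onD1)
  ultimately show ?thesis
    by (simp add: bij_betw_def)
qed

lemma card_partition_on_interval: "card {P. partition_on {a<..a + m} P} = Bell m"
proof -
  have "bij_betw (plus a) {1..m} {a<..a + m}"
    by (auto simp: bij_betw_def image_add_atLeastAtMost)
  then show ?thesis
    unfolding Bell_def set_partitions_def
    by (metis bij_betw_partition_on bij_betw_same_card)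
qed

section \<open>Monochromatic partitions\<close>

definition monochromatic_partitions :: "'a set \<Rightarrow> ('a \<Rightarrow> 'b) \<Rightarrow> 'a set set set" where
  "monochromatic_partitions A c = {P. partition_on A P \<and> (\<forall>X\<in>P. \<forall>x\<in>X. \<forall>y\<in>X. c x = c y)}"

(* Use the following rules instead of unfolding the definition: as a premise, the condition
   c x = c y becomes a rewrite rule on which the simplifier loops. *)

lemma monochromatic_partitionsI:
  "partition_on A P \<Longrightarrow> (\<And>X x y. X \<in> P \<Longrightarrow> x \<in> X \<Longrightarrow> y \<in> X \<Longrightarrow> c x = c y)
    \<Longrightarrow> P \<in> monochromatic_partitions A c"
  unfolding monochromatic_partitions_def by blast

lemma monochromatic_partitionsD:
  assumes "P \<in> monochromatic_partitions A c"
  shows "partition_on A P" and "X \<in> P \<Longrightarrow> x \<in> X \<Longrightarrow> y \<in> X \<Longrightarrow> c x = c y"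
  using assms unfolding monochromatic_partitions_def by blast+

lemma finite_monochromatic_partitions: "finite A \<Longrightarrow> finite (monochromatic_partitions A c)"
  unfolding monochromatic_partitions_def
  by (rule finite_subset[OF _ finitely_many_partition_on]) auto

lemma monochromatic_partitions_const: "monochromatic_partitions A (\<lambda>_. v) = {P. partition_on A P}"
  by (simp add: monochromatic_partitions_def)

lemma monochromatic_partitions_cong:
  assumes "\<And>x y. x \<in> A \<Longrightarrow> y \<in> A \<Longrightarrow> c x = c y \<longleftrightarrow> d x = d y"
  shows "monochromatic_partitions A c = monochromatic_partitions A d"
proof -
  have "(\<forall>X\<in>P. \<forall>x\<in>X. \<forall>y\<in>X. c x = c y) \<longleftrightarrow> (\<forall>X\<in>P. \<forall>x\<in>X. \<forall>y\<in>X. d x = d y)"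
    if "partition_on A P" for P
  proof -
    have "x \<in> A" if "X \<in> P" "x \<in> X" for X x
      using partition_on_block_subset[OF \<open>partition_on A P\<close>] that by blast
    then show ?thesis using assms by simp
  qed
  then show ?thesis
    unfolding monochromatic_partitions_def by (intro Collect_cong conj_cong refl)
qed

lemma monochromatic_block_subset:
  assumes P: "P \<in> monochromatic_partitions (A \<union> B) c" and colours: "c ` A \<inter> c ` B = {}"
    and X: "X \<in> P"
  shows "X \<subseteq> A \<or> X \<subseteq> B"
proof (rule ccontr)
  assume "\<not> (X \<subseteq> A \<or> X \<subseteq> B)"
  then obtain a b where ab: "a \<in> X" "a \<notin> B" "b \<in> X" "b \<notin> A" by blast
  have "X \<subseteq> A \<union> B"
    using partition_on_block_subset[OF monochromatic_partitionsD(1)[OF P] X] .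
  with ab have "c a \<in> c ` A" "c b \<in> c ` B" by auto
  moreover have "c a = c b"
    using monochromatic_partitionsD(2)[OF P X ab(1,3)] .
  ultimately show False
    using colours by (metis IntI empty_iff)
qed

lemma monochromatic_partitions_Un_mem:
  assumes "A \<inter> B = {}" "P \<in> monochromatic_partitions A c" "Q \<in> monochromatic_partitions B c"
  shows "P \<union> Q \<in> monochromatic_partitions (A \<union> B) c"
proof (rule monochromatic_partitionsI)
  show "partition_on (A \<union> B) (P \<union> Q)"
    using monochromatic_partitionsD(1)[OF assms(2)] monochromatic_partitionsD(1)[OF assms(3)] assms(1)
    by (rule partition_on_Un)
  show "c x = c y" if "X \<in> P \<union> Q" "x \<in> X" "y \<in> X" for X x y
    using that monochromatic_partitionsD(2)[OF assms(2)] monochromatic_partitionsD(2)[OF assms(3)]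
    by blast
qed

lemma monochromatic_partitions_restrict:
  assumes "A \<inter> B = {}" "c ` A \<inter> c ` B = {}" and R: "R \<in> monochromatic_partitions (A \<union> B) c"
  shows "{X \<in> R. X \<subseteq> A} \<in> monochromatic_partitions A c"
proof (rule monochromatic_partitionsI)
  show "partition_on A {X \<in> R. X \<subseteq> A}"
    using monochromatic_partitionsD(1)[OF R] monochromatic_block_subset[OF R assms(2)] assms(1)
    by (auto intro!: partition_on_blocks_subset)
  show "c x = c y" if "X \<in> {X \<in> R. X \<subseteq> A}" "x \<in> X" "y \<in> X" for X x y
    using that monochromatic_partitionsD(2)[OF R] by blast
qed

lemma bij_betw_monochromatic_partitions_Un:
  assumes disjoint: "A \<inter> B = {}" and colours: "c ` A \<inter> c ` B = {}"
  shows "bij_betw (\<lambda>(P, Q). P \<union> Q)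
           (monochromatic_partitions A c \<times> monochromatic_partitions B c)
           (monochromatic_partitions (A \<union> B) c)"
proof -
  let ?split = "\<lambda>R. ({X \<in> R. X \<subseteq> A}, {X \<in> R. X \<subseteq> B})"
  have split_Un: "?split (P \<union> Q) = (P, Q)"
    if "P \<in> monochromatic_partitions A c" "Q \<in> monochromatic_partitions B c" for P Q
  proof -
    note P = monochromatic_partitionsD(1)[OF that(1)] and Q = monochromatic_partitionsD(1)[OF that(2)]
    have "X \<subseteq> A \<and> \<not> X \<subseteq> B" if "X \<in> P" for X
      using partition_on_block_subset[OF P that] partition_onD3[OF P] that disjoint
      by (metis Int_greatest subset_empty)
    moreover have "X \<subseteq> B \<and> \<not> X \<subseteq> A" if "X \<in> Q" for X
      using partition_on_block_subset[OF Q that] partition_onD3[OF Q] that disjoint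
      by (metis Int_greatest subset_empty)
    ultimately show ?thesis by auto
  qed
  have Un_split: "{X \<in> R. X \<subseteq> A} \<union> {X \<in> R. X \<subseteq> B} = R"
    if "R \<in> monochromatic_partitions (A \<union> B) c" for R
    using monochromatic_block_subset[OF that colours] by blast
  have split_mem: "?split R \<in> monochromatic_partitions A c \<times> monochromatic_partitions B c"
    if "R \<in> monochromatic_partitions (A \<union> B) c" for R
    using monochromatic_partitions_restrict[OF disjoint colours that]
      monochromatic_partitions_restrict[of B A c R] disjoint colours that
    by (simp add: Int_commute Un_commute)
  show ?thesis
  proof (rule bij_betw_byWitness[where f' = ?split])
    show "\<forall>a \<in> monochromatic_partitions A c \<times> monochromatic_partitions B c.
            ?split ((\<lambda>(P, Q). P \<union> Q) a) = a"
      using split_Un by blast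
    show "\<forall>R \<in> monochromatic_partitions (A \<union> B) c. (\<lambda>(P, Q). P \<union> Q) (?split R) = R"
      using Un_split by simp
    show "(\<lambda>(P, Q). P \<union> Q) ` (monochromatic_partitions A c \<times> monochromatic_partitions B c)
            \<subseteq> monochromatic_partitions (A \<union> B) c"
      using monochromatic_partitions_Un_mem[OF disjoint] by auto
    show "?split ` monochromatic_partitions (A \<union> B) c
            \<subseteq> monochromatic_partitions A c \<times> monochromatic_partitions B c"
      using split_mem by blast
  qed
qed

section \<open>Avoiders\<close>

definition antitone_colourings :: "nat \<Rightarrow> nat \<Rightarrow> (nat \<Rightarrow> nat) set" where
  "antitone_colourings n k = {c \<in> {1..n} \<rightarrow>\<^sub>E {1..k}. antimono_on {1..n} c}"

lemma finite_antitone_colourings: "finite (antitone_colourings n k)"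
  unfolding antitone_colourings_def
  by (rule finite_subset[where B = "{1..n} \<rightarrow>\<^sub>E {1..k}"]) (auto intro: finite_PiE)

lemma antitone_colouringsD:
  assumes "c \<in> antitone_colourings n k"
  shows "i \<in> {1..n} \<Longrightarrow> c i \<in> {1..k}"
    and "i \<in> {1..n} \<Longrightarrow> j \<in> {1..n} \<Longrightarrow> i \<le> j \<Longrightarrow> c j \<le> c i"
    and "i \<notin> {1..n} \<Longrightarrow> c i = undefined"
  using assms by (auto simp: antitone_colourings_def monotone_on_def)

lemma same_block_same_colour:
  assumes "\<not> contains_11_12 (P, c)" "\<not> contains_12_11 (P, c)" and "same_block P i j"
  shows "c i = c j"
proof -
  have ordered: "c i = c j" if "i < j" "same_block P i j" for i j
  proof -
    have "\<not> c i < c j" "\<not> c j < c i"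
      using assms(1,2) that unfolding contains_11_12_def contains_12_11_def by auto
    then show ?thesis by simp
  qed
  show ?thesis
  proof (cases i j rule: linorder_cases)
    case greater
    moreover have "same_block P j i"
      using assms(3) unfolding same_block_def by blast
    ultimately show ?thesis by (simp add: ordered)
  qed (simp_all add: ordered assms(3))
qed

lemma antimono_on_if_not_contains_11_22:
  assumes P: "partition_on {1..n} P" and "\<not> contains_11_22 n (P, c)"
    and same_colour: "\<And>i j. same_block P i j \<Longrightarrow> c i = c j"
  shows "antimono_on {1..n} c"
proof (rule monotone_onI)
  fix i j assume ij: "i \<in> {1..n}" "j \<in> {1..n}" "i \<le> j"
  show "c j \<le> c i"
  proof (cases "same_block P i j")
    case True
    then show ?thesis using same_colour[OF True] by simp
  next
    case False
    moreover have "same_block P i i"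
      using ij partition_onD1[OF P] by (auto simp: same_block_def)
    ultimately show ?thesis
      using assms(2) ij unfolding contains_11_22_def by (fastforce simp: not_less)
  qed
qed

lemma avoiders_eq:
  "avoiders n k =
     {(P, c). c \<in> antitone_colourings n k \<and> P \<in> monochromatic_partitions {1..n} c}"
proof -
  have "(P, c) \<in> avoiders n k \<longleftrightarrow>
          c \<in> antitone_colourings n k \<and> P \<in> monochromatic_partitions {1..n} c" for P c
  proof
    assume "(P, c) \<in> avoiders n k"
    then have P: "partition_on {1..n} P" and c: "c \<in> {1..n} \<rightarrow>\<^sub>E {1..k}"
      and no_11_12: "\<not> contains_11_12 (P, c)" and no_12_11: "\<not> contains_12_11 (P, c)"
      and no_11_22: "\<not> contains_11_22 n (P, c)"
      by (simp_all add: avoiders_def colored_partitions_def set_partitions_def)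
    note same_colour = same_block_same_colour[OF no_11_12 no_12_11]
    have "antimono_on {1..n} c"
      using P no_11_22 same_colour by (rule antimono_on_if_not_contains_11_22)
    moreover have "P \<in> monochromatic_partitions {1..n} c"
      by (rule monochromatic_partitionsI[OF P], rule same_colour) (auto simp: same_block_def)
    ultimately show "c \<in> antitone_colourings n k \<and> P \<in> monochromatic_partitions {1..n} c"
      using c by (simp add: antitone_colourings_def)
  next
    assume "c \<in> antitone_colourings n k \<and> P \<in> monochromatic_partitions {1..n} c"
    then have c: "c \<in> {1..n} \<rightarrow>\<^sub>E {1..k}" and anti: "antimono_on {1..n} c"
      and P: "P \<in> monochromatic_partitions {1..n} c"
      by (simp_all add: antitone_colourings_def)
    have same_colour: "c i = c j" if "same_block P i j" for i j
      using that monochromatic_partitionsD(2)[OF P] unfolding same_block_def by blast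
    have "\<not> contains_11_22 n (P, c)"
      using anti unfolding contains_11_22_def by (auto simp: monotone_on_def not_less)
    moreover have "\<not> contains_11_12 (P, c)" "\<not> contains_12_11 (P, c)"
      using same_colour by (auto simp: contains_11_12_def contains_12_11_def)
    ultimately show "(P, c) \<in> avoiders n k"
      using monochromatic_partitionsD(1)[OF P] c
      by (simp add: avoiders_def colored_partitions_def set_partitions_def)
  qed
  then show ?thesis by auto
qed

lemma card_avoiders:
  "card (avoiders n k) = (\<Sum>c\<in>antitone_colourings n k. card (monochromatic_partitions {1..n} c))"
proof -
  have "avoiders n k = prod.swap ` (SIGMA c:antitone_colourings n k. monochromatic_partitions {1..n} c)"
    by (auto simp: avoiders_eq)
  then show ?thesis
    by (simp add: card_image finite_antitone_colourings finite_monochromatic_partitions)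
qed

section \<open>Removing the colour class of colour 1\<close>

definition lift_colouring :: "nat \<Rightarrow> nat \<Rightarrow> (nat \<Rightarrow> nat) \<Rightarrow> nat \<Rightarrow> nat" where
  "lift_colouring n m c = restrict (\<lambda>i. if i \<le> n - m then Suc (c i) else 1) {1..n}"

lemma lift_colouring_eq_one:
  assumes "c \<in> antitone_colourings (n - m) k" "i \<in> {1..n}"
  shows "lift_colouring n m c i = 1 \<longleftrightarrow> n - m < i"
proof (cases "i \<le> n - m")
  case True
  then have "c i \<in> {1..k}"
    using assms by (auto simp: antitone_colourings_def)
  then show ?thesis
    using True assms(2) by (simp add: lift_colouring_def)
qed (use assms(2) in \<open>simp add: lift_colouring_def\<close>)

lemma lift_colouring_in_antitone_colourings:
  assumes c: "c \<in> antitone_colourings (n - m) k"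
  shows "lift_colouring n m c \<in> antitone_colourings n (Suc k)"
proof -
  note range = antitone_colouringsD(1)[OF c] and anti = antitone_colouringsD(2)[OF c]
  have "lift_colouring n m c \<in> {1..n} \<rightarrow>\<^sub>E {1..Suc k}"
    using range by (fastforce simp: lift_colouring_def)
  moreover have "antimono_on {1..n} (lift_colouring n m c)"
    using anti by (auto simp: lift_colouring_def monotone_on_def)
  ultimately show ?thesis
    by (simp add: antitone_colourings_def)
qed

lemma antitone_colouring_ones:
  assumes c: "c \<in> antitone_colourings n (Suc k)"
  obtains m where "m \<le> n" "\<And>i. i \<in> {1..n} \<Longrightarrow> c i = 1 \<longleftrightarrow> n - m < i"
proof -
  let ?F = "{i \<in> {1..n}. c i = 1}"
  note range = antitone_colouringsD(1)[OF c] and anti = antitone_colouringsD(2)[OF c]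
  show ?thesis
  proof (cases "?F = {}")
    case True
    then show ?thesis
      by (intro that[of 0]) auto
  next
    case False
    define a where "a = Min ?F"
    have a: "a \<in> ?F" "\<And>i. i \<in> ?F \<Longrightarrow> a \<le> i"
      using Min_in[OF _ False] Min_le unfolding a_def by auto
    have "c i = 1 \<longleftrightarrow> a \<le> i" if "i \<in> {1..n}" for i
    proof
      assume "a \<le> i"
      then have "c i \<le> c a"
        using anti[of a i] a(1) that by simp
      then show "c i = 1"
        using a(1) range[OF that] by simp
    qed (use a(2) that in auto)
    moreover have "n - (Suc n - a) = a - 1"
      using a(1) by simp
    ultimately show ?thesis
      using a(1) by (intro that[of "Suc n - a"]) auto
  qed
qed

lemma antitone_colouring_eq_lift:
  assumes c: "c \<in> antitone_colourings n (Suc k)"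
    and ones: "\<And>i. i \<in> {1..n} \<Longrightarrow> c i = 1 \<longleftrightarrow> n - m < i"
  shows "restrict (\<lambda>i. c i - 1) {1..n - m} \<in> antitone_colourings (n - m) k"
    and "c = lift_colouring n m (restrict (\<lambda>i. c i - 1) {1..n - m})"
proof -
  note range = antitone_colouringsD(1)[OF c] and anti = antitone_colouringsD(2)[OF c]
  have low: "c i \<in> {2..Suc k}" if "i \<in> {1..n - m}" for i
  proof -
    have "i \<in> {1..n}" using that by auto
    then show ?thesis using range[of i] ones[of i] that by auto
  qed
  have "c i - 1 \<in> {1..k}" if "i \<in> {1..n - m}" for i
    using low[OF that] by auto
  then have "restrict (\<lambda>i. c i - 1) {1..n - m} \<in> {1..n - m} \<rightarrow>\<^sub>E {1..k}"
    by auto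
  moreover have "antimono_on {1..n - m} (restrict (\<lambda>i. c i - 1) {1..n - m})"
  proof (rule monotone_onI)
    fix i j assume "i \<in> {1..n - m}" "j \<in> {1..n - m}" "i \<le> j"
    then show "restrict (\<lambda>i. c i - 1) {1..n - m} j \<le> restrict (\<lambda>i. c i - 1) {1..n - m} i"
      using anti[of i j] by (simp add: diff_le_mono)
  qed
  ultimately show "restrict (\<lambda>i. c i - 1) {1..n - m} \<in> antitone_colourings (n - m) k"
    by (simp add: antitone_colourings_def)
  show "c = lift_colouring n m (restrict (\<lambda>i. c i - 1) {1..n - m})"
  proof
    fix i
    show "c i = lift_colouring n m (restrict (\<lambda>i. c i - 1) {1..n - m}) i"
    proof (cases "i \<in> {1..n}")
      case True
      then show ?thesis
        using low[of i] ones[OF True] by (auto simp: lift_colouring_def)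
    next
      case False
      then show ?thesis
        using antitone_colouringsD(3)[OF c False] by (auto simp: lift_colouring_def)
    qed
  qed
qed

lemma inj_on_lift_colouring:
  "inj_on (\<lambda>(m, c). lift_colouring n m c) (SIGMA m:{..n}. antitone_colourings (n - m) k)"
proof (rule inj_onI, clarify)
  fix m c m' c'
  assume m: "m \<le> n" "c \<in> antitone_colourings (n - m) k"
    and m': "m' \<le> n" "c' \<in> antitone_colourings (n - m') k"
    and eq: "lift_colouring n m c = lift_colouring n m' c'"
  have ones: "{i \<in> {1..n}. lift_colouring n m c i = 1} = {n - m<..n}"
    "{i \<in> {1..n}. lift_colouring n m' c' i = 1} = {n - m'<..n}"
    using lift_colouring_eq_one[OF m(2)] lift_colouring_eq_one[OF m'(2)] by auto
  have "m = m'"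
    using arg_cong[OF ones(1), of card] arg_cong[OF ones(2), of card] eq m(1) m'(1) by simp
  moreover have "c i = c' i" for i
  proof (cases "i \<in> {1..n - m}")
    case True
    then have "i \<in> {1..n}" by auto
    then show ?thesis
      using fun_cong[OF eq, of i] True \<open>m = m'\<close> by (simp add: lift_colouring_def)
  next
    case False
    then show ?thesis
      using antitone_colouringsD(3)[OF m(2)] antitone_colouringsD(3)[OF m'(2)] \<open>m = m'\<close> by simp
  qed
  ultimately show "m = m' \<and> c = c'"
    by auto
qed

lemma bij_betw_lift_colouring:
  "bij_betw (\<lambda>(m, c). lift_colouring n m c)
     (SIGMA m:{..n}. antitone_colourings (n - m) k) (antitone_colourings n (Suc k))"
  unfolding bij_betw_def
proof
  show "inj_on (\<lambda>(m, c). lift_colouring n m c) (SIGMA m:{..n}. antitone_colourings (n - m) k)"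
    by (rule inj_on_lift_colouring)
  show "(\<lambda>(m, c). lift_colouring n m c) ` (SIGMA m:{..n}. antitone_colourings (n - m) k) =
        antitone_colourings n (Suc k)"
  proof
    show "(\<lambda>(m, c). lift_colouring n m c) ` (SIGMA m:{..n}. antitone_colourings (n - m) k)
          \<subseteq> antitone_colourings n (Suc k)"
      using lift_colouring_in_antitone_colourings by auto
    show "antitone_colourings n (Suc k)
          \<subseteq> (\<lambda>(m, c). lift_colouring n m c) ` (SIGMA m:{..n}. antitone_colourings (n - m) k)"
    proof
      fix c assume c: "c \<in> antitone_colourings n (Suc k)"
      obtain m where "m \<le> n" and ones: "\<And>i. i \<in> {1..n} \<Longrightarrow> c i = 1 \<longleftrightarrow> n - m < i"
        using antitone_colouring_ones[OF c] by blast
      with antitone_colouring_eq_lift[OF c ones]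
      show "c \<in> (\<lambda>(m, c). lift_colouring n m c) ` (SIGMA m:{..n}. antitone_colourings (n - m) k)"
        by force
    qed
  qed
qed

lemma card_monochromatic_partitions_lift:
  assumes "m \<le> n" and c: "c \<in> antitone_colourings (n - m) k"
  shows "card (monochromatic_partitions {1..n} (lift_colouring n m c))
           = Bell m * card (monochromatic_partitions {1..n - m} c)"
proof -
  let ?c = "lift_colouring n m c" and ?L = "{1..n - m}" and ?H = "{n - m<..n}"
  have split: "{1..n} = ?L \<union> ?H"
    using \<open>m \<le> n\<close> by auto
  have "?c i \<noteq> ?c j" if "i \<in> ?L" "j \<in> ?H" for i j
    using lift_colouring_eq_one[OF c, of i] lift_colouring_eq_one[OF c, of j] that by auto
  then have "?c ` ?L \<inter> ?c ` ?H = {}"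
    by blast
  then have "card (monochromatic_partitions {1..n} ?c)
      = card (monochromatic_partitions ?L ?c) * card (monochromatic_partitions ?H ?c)"
    unfolding split
    by (subst bij_betw_same_card[OF bij_betw_monochromatic_partitions_Un, symmetric])
      (auto simp: card_cartesian_product)
  moreover have "monochromatic_partitions ?L ?c = monochromatic_partitions ?L c"
    by (rule monochromatic_partitions_cong) (auto simp: lift_colouring_def)
  moreover have "monochromatic_partitions ?H ?c = {P. partition_on ?H P}"
  proof -
    have "?c i = 1" if "i \<in> ?H" for i
      using lift_colouring_eq_one[OF c, of i] that by auto
    then have "monochromatic_partitions ?H ?c = monochromatic_partitions ?H (\<lambda>_. 1)"
      by (intro monochromatic_partitions_cong) auto
    then show ?thesis
      by (simp add: monochromatic_partitions_const)
  qed
  moreover have "card {P. partition_on ?H P} = Bell m"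
    using card_partition_on_interval[of "n - m" m] \<open>m \<le> n\<close> by simp
  ultimately show ?thesis
    by simp
qed

lemma card_avoiders_Suc:
  "card (avoiders n (Suc k)) = (\<Sum>m\<le>n. Bell m * card (avoiders (n - m) k))"
proof -
  have "card (avoiders n (Suc k))
      = (\<Sum>c\<in>antitone_colourings n (Suc k). card (monochromatic_partitions {1..n} c))"
    by (rule card_avoiders)
  also have "\<dots> = (\<Sum>(m, c)\<in>(SIGMA m:{..n}. antitone_colourings (n - m) k).
                     card (monochromatic_partitions {1..n} (lift_colouring n m c)))"
    by (subst sum.reindex_bij_betw[OF bij_betw_lift_colouring, symmetric]) (simp add: case_prod_unfold)
  also have "\<dots> = (\<Sum>m\<le>n. \<Sum>c\<in>antitone_colourings (n - m) k.
                     card (monochromatic_partitions {1..n} (lift_colouring n m c)))"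
    by (simp add: sum.Sigma finite_antitone_colourings)
  also have "\<dots> = (\<Sum>m\<le>n. \<Sum>c\<in>antitone_colourings (n - m) k.
                     Bell m * card (monochromatic_partitions {1..n - m} c))"
    by (intro sum.cong refl card_monochromatic_partitions_lift) auto
  also have "\<dots> = (\<Sum>m\<le>n. Bell m * card (avoiders (n - m) k))"
    by (simp add: card_avoiders sum_distrib_left)
  finally show ?thesis .
qed

lemma card_avoiders_0: "card (avoiders n 0) = (if n = 0 then 1 else 0)"
proof -
  have "{1..n} \<rightarrow>\<^sub>E {1..0::nat} = (if n = 0 then {\<lambda>_. undefined} else {})"
    by (simp add: PiE_eq_empty_iff) presburger
  then have "antitone_colourings n 0 = (if n = 0 then {\<lambda>_. undefined} else {})"
    by (auto simp: antitone_colourings_def)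
  then show ?thesis
    by (simp add: card_avoiders monochromatic_partitions_def partition_on_empty)
qed

section \<open>Compositions\<close>

lemma (in comm_monoid_set) atLeast1_atMost_Suc_shift:
  "F g {1..Suc k} = g 1 \<^bold>* F (\<lambda>i. g (Suc i)) {1..k}"
  by (simp add: atLeast_Suc_atMost flip: shift_bounds_cl_Suc_ivl del: cl_ivl_Suc)

lemma finite_compositions: "finite (compositions k n)"
proof (rule finite_subset)
  show "compositions k n \<subseteq> {1..k} \<rightarrow>\<^sub>E {0..n}"
    unfolding compositions_def using member_le_sum[of _ "{1..k}"] by fastforce
qed (auto intro: finite_PiE)

lemma compositions_Suc_tail:
  assumes "t \<in> compositions (Suc k) n"
  shows "t 1 \<le> n" and "restrict (\<lambda>j. t (Suc j)) {1..k} \<in> compositions k (n - t 1)"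
proof -
  have "t 1 + (\<Sum>j=1..k. t (Suc j)) = n"
    using assms sum.atLeast1_atMost_Suc_shift[of t k] by (simp add: compositions_def)
  moreover have "(\<Sum>j=1..k. restrict (\<lambda>j. t (Suc j)) {1..k} j) = (\<Sum>j=1..k. t (Suc j))"
    by (rule sum.cong) auto
  ultimately show "t 1 \<le> n" "restrict (\<lambda>j. t (Suc j)) {1..k} \<in> compositions k (n - t 1)"
    by (auto simp: compositions_def)
qed

lemma compositions_Suc_cons:
  assumes "m \<le> n" "s \<in> compositions k (n - m)"
  shows "restrict (\<lambda>j. if j = 1 then m else s (j - 1)) {1..Suc k} \<in> compositions (Suc k) n"
proof -
  let ?t = "restrict (\<lambda>j. if j = 1 then m else s (j - 1)) {1..Suc k}"
  have "(\<Sum>j=1..k. ?t (Suc j)) = (\<Sum>j=1..k. s j)"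
    by (rule sum.cong) auto
  then show ?thesis
    using assms sum.atLeast1_atMost_Suc_shift[of ?t k] by (auto simp: compositions_def)
qed

lemma bij_betw_compositions_Suc:
  "bij_betw (\<lambda>t. (t 1, restrict (\<lambda>j. t (Suc j)) {1..k}))
     (compositions (Suc k) n) (SIGMA m:{..n}. compositions k (n - m))"
proof -
  let ?split = "\<lambda>t. (t 1, restrict (\<lambda>j. t (Suc j)) {1..k})"
  let ?join = "\<lambda>(m, s). restrict (\<lambda>j. if j = 1 then m else s (j - 1)) {1..Suc k}"
  have join_split: "?join (?split t) = t" if "t \<in> compositions (Suc k) n" for t
  proof
    fix j
    have "t \<in> {1..Suc k} \<rightarrow>\<^sub>E UNIV"
      using that by (simp add: compositions_def)
    then show "?join (?split t) j = t j"
      by (cases "j \<in> {1..Suc k}") (auto dest: PiE_arb)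
  qed
  have split_join: "?split (?join (m, s)) = (m, s)" if "s \<in> compositions k (n - m)" for m s
  proof -
    have s: "s \<in> {1..k} \<rightarrow>\<^sub>E UNIV"
      using that by (simp add: compositions_def)
    have "restrict (\<lambda>j. ?join (m, s) (Suc j)) {1..k} = s"
    proof
      fix j
      show "restrict (\<lambda>j. ?join (m, s) (Suc j)) {1..k} j = s j"
        using s by (cases "j \<in> {1..k}") (auto dest: PiE_arb)
    qed
    then show ?thesis
      by simp
  qed
  show ?thesis
  proof (rule bij_betw_byWitness[where f' = ?join])
    show "\<forall>t \<in> compositions (Suc k) n. ?join (?split t) = t"
      using join_split by blast
    show "\<forall>a \<in> (SIGMA m:{..n}. compositions k (n - m)). ?split (?join a) = a"
      using split_join by blast
    show "?split ` compositions (Suc k) n \<subseteq> (SIGMA m:{..n}. compositions k (n - m))"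
      using compositions_Suc_tail by blast
    show "?join ` (SIGMA m:{..n}. compositions k (n - m)) \<subseteq> compositions (Suc k) n"
      using compositions_Suc_cons by auto
  qed
qed

lemma compositions_0: "compositions 0 n = (if n = 0 then {\<lambda>_. undefined} else {})"
  unfolding compositions_def by (auto simp: PiE_empty_domain)

lemma sum_compositions_Suc:
  fixes f :: "nat \<Rightarrow> 'a :: comm_semiring_1"
  shows "(\<Sum>t\<in>compositions (Suc k) n. \<Prod>j=1..Suc k. f (t j))
           = (\<Sum>m\<le>n. f m * (\<Sum>t\<in>compositions k (n - m). \<Prod>j=1..k. f (t j)))"
proof -
  let ?g = "\<lambda>(m, s). f m * (\<Prod>j=1..k. f (s j))"
  have "(\<Prod>j=1..Suc k. f (t j)) = ?g (t 1, restrict (\<lambda>j. t (Suc j)) {1..k})" for t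
  proof -
    have "(\<Prod>j=1..k. f (restrict (\<lambda>j. t (Suc j)) {1..k} j)) = (\<Prod>j=1..k. f (t (Suc j)))"
      by (rule prod.cong) auto
    then show ?thesis
      using prod.atLeast1_atMost_Suc_shift[of "\<lambda>j. f (t j)" k] by simp
  qed
  then have "(\<Sum>t\<in>compositions (Suc k) n. \<Prod>j=1..Suc k. f (t j))
      = (\<Sum>t\<in>compositions (Suc k) n. ?g (t 1, restrict (\<lambda>j. t (Suc j)) {1..k}))"
    by simp
  also have "\<dots> = (\<Sum>a\<in>(SIGMA m:{..n}. compositions k (n - m)). ?g a)"
    by (rule sum.reindex_bij_betw[OF bij_betw_compositions_Suc])
  also have "\<dots> = (\<Sum>m\<le>n. \<Sum>s\<in>compositions k (n - m). f m * (\<Prod>j=1..k. f (s j)))"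
    by (simp add: sum.Sigma finite_compositions)
  also have "\<dots> = (\<Sum>m\<le>n. f m * (\<Sum>t\<in>compositions k (n - m). \<Prod>j=1..k. f (t j)))"
    by (simp add: sum_distrib_left)
  finally show ?thesis .
qed

lemma card_avoiders_eq_sum_compositions:
  "card (avoiders n k) = (\<Sum>t\<in>compositions k n. \<Prod>j=1..k. Bell (t j))"
proof (induction k arbitrary: n)
  case 0
  show ?case
    by (simp add: card_avoiders_0 compositions_0)
next
  case (Suc k)
  show ?case
    by (simp only: card_avoiders_Suc sum_compositions_Suc Suc.IH)
qed

theorem mainTheorem19:
  fixes n k :: nat
  assumes "k \<ge> 1"
  shows "card (avoiders n k) = (\<Sum>t\<in>compositions k n. \<Prod>j=1..k. Bell (t j))"
  by (rule card_avoiders_eq_sum_compositions)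

end
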